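(* Let $n,k$ be integers with $2<2k\le n$ such that $\mathrm{Pet}(n,k)$ is non-bipartite. Then either $g_{odd}(\mathrm{Pet}(n,k))=k+3$, or $$\max\Big(\frac{n}{k},\ \min\{\gcd(n,k-1),\gcd(n,k+1)\}+2\Big)\ \le\ g_{odd}(\mathrm{Pet}(n,k))\ \le\ \frac{n}{k}\,\mathrm{par}(k)+k+1,$$ where $\mathrm{par}(k)=1$ if $k$ is odd and $\mathrm{par}(k)=0$ if $k$ is even.
   Context: For integers $n,k$ with $2<2k\le n$, the generalized Petersen graph $\mathrm{Pet}(n,k)$ has vertex set $\{u_0,\dots,u_{n-1}\}\cup\{v_0,\dots,v_{n-1}\}$ and edge set $\{u_iu_{i+1}\}\cup\{u_iv_i\}\cup\{v_iv_{i+k}\}$, $i\in\{0,\dots,n-1\}$, with indices taken modulo $n$. For a non-bipartite graph $G$, the odd girth $g_{odd}(G)$ is the length of a shortest odd cycle of $G$. *)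

theory Defs
  imports Complex_Main
begin

definition is_cycle :: "'a set \<Rightarrow> ('a \<Rightarrow> 'a \<Rightarrow> bool) \<Rightarrow> 'a list \<Rightarrow> bool" where
  "is_cycle V E xs \<longleftrightarrow> length xs \<ge> 3 \<and> distinct xs \<and> set xs \<subseteq> V \<and>
     (\<forall>i < length xs. E (xs ! i) (xs ! ((i + 1) mod length xs)))"

definition bipartite :: "'a set \<Rightarrow> ('a \<Rightarrow> 'a \<Rightarrow> bool) \<Rightarrow> bool" where
  "bipartite V E \<longleftrightarrow> (\<exists>c :: 'a \<Rightarrow> bool. \<forall>x\<in>V. \<forall>y\<in>V. E x y \<longrightarrow> c x \<noteq> c y)"

definition odd_girth :: "'a set \<Rightarrow> ('a \<Rightarrow> 'a \<Rightarrow> bool) \<Rightarrow> nat" where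
  "odd_girth V E = (LEAST L. \<exists>xs. is_cycle V E xs \<and> length xs = L \<and> odd L)"

(* Generalized Petersen graph Pet(n,k): vertex (False,i) is u_i, (True,i) is v_i, 0 <= i < n. *)
definition pet_V :: "nat \<Rightarrow> (bool \<times> nat) set" where
  "pet_V n = UNIV \<times> {..<n}"

definition pet_E :: "nat \<Rightarrow> nat \<Rightarrow> bool \<times> nat \<Rightarrow> bool \<times> nat \<Rightarrow> bool" where
  "pet_E n k x y = (case x of (b, i) \<Rightarrow> case y of (c, j) \<Rightarrow>
      i < n \<and> j < n \<and>
      ((\<not> b \<and> \<not> c \<and> (j = (i + 1) mod n \<or> i = (j + 1) mod n)) \<or>
       (b \<noteq> c \<and> i = j) \<or>
       (b \<and> c \<and> (j = (i + k) mod n \<or> i = (j + k) mod n))))"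

definition par :: "nat \<Rightarrow> nat" where
  "par k = (if odd k then 1 else 0)"

end

theory Submission
  imports Defs
begin

text \<open>
  Follow a shortest odd cycle and let \<open>x\<close> and \<open>y\<close> be the signed numbers of outer edges
  \<open>u\<^sub>i u\<^sub>i\<^sub>+\<^sub>1\<close> and inner edges \<open>v\<^sub>i v\<^sub>i\<^sub>+\<^sub>k\<close> it traverses. The indices close up, so \<open>n\<close> divides
  \<open>x + k y\<close>; the cycle changes rim an even number of times, so \<open>x + y\<close> is odd; and
  \<open>|x| + |y| \<le> g\<close>, with \<open>|x| + |y| + 2 \<le> g\<close> when the cycle uses both rims. If \<open>x + k y = 0\<close>
  then \<open>k\<close> is even and \<open>g \<ge> k + 3\<close>, which the cycle \<open>u\<^sub>0 \<dots> u\<^sub>k v\<^sub>k v\<^sub>0\<close> attains. Otherwise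
  \<open>n \<le> |x + k y| \<le> k g\<close>, and since \<open>gcd(n, k - 1)\<close> divides \<open>x + y\<close> while both gcds divide
  \<open>y\<close> when \<open>x = 0\<close>, the gcd bound follows. The upper bound comes from \<open>u\<^sub>0 \<dots> u\<^sub>k v\<^sub>k v\<^sub>0\<close>
  when \<open>k\<close> is even and, when \<open>k\<close> and \<open>n\<close> are odd, from \<open>u\<^sub>0 \<dots> u\<^sub>r v\<^sub>r v\<^sub>r\<^sub>+\<^sub>k \<dots> v\<^sub>r\<^sub>+\<^sub>q\<^sub>k = v\<^sub>0\<close>
  where \<open>n = r + q k\<close> and \<open>1 \<le> r \<le> k\<close>.
\<close>

lemma odd_girth_le:
  assumes "is_cycle V E xs" "odd (length xs)"
  shows "odd_girth V E \<le> length xs"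
  unfolding odd_girth_def by (rule Least_le) (use assms in blast)

lemma odd_girth_attained:
  assumes "is_cycle V E xs" "odd (length xs)"
  obtains ys where "is_cycle V E ys" "length ys = odd_girth V E" "odd (odd_girth V E)"
proof -
  have "\<exists>ys. is_cycle V E ys \<and> length ys = odd_girth V E \<and> odd (odd_girth V E)"
    unfolding odd_girth_def by (rule LeastI) (use assms in blast)
  then show thesis using that by blast
qed

lemma is_cycle_map:
  assumes "L \<ge> 3" "inj_on f {..<L}" "\<forall>i<L. f i \<in> V" "\<forall>i<L. E (f i) (f ((i + 1) mod L))"
  shows "is_cycle V E (map f [0..<L])"
  using assms by (auto simp: is_cycle_def distinct_map atLeast0LessThan)

definition cyclic_sum :: "('a \<Rightarrow> 'a \<Rightarrow> 'b::comm_monoid_add) \<Rightarrow> 'a list \<Rightarrow> 'b" where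
  "cyclic_sum f xs = (\<Sum>i<length xs. f (xs ! i) (xs ! ((i + 1) mod length xs)))"

lemma sum_lessThan_mod_shift:
  "(\<Sum>i<L. f ((i + 1) mod L)) = (\<Sum>i<(L::nat). f i :: 'a::comm_monoid_add)"
proof (cases L)
  case (Suc m)
  have "(\<Sum>i<Suc m. f ((i + 1) mod Suc m)) = (\<Sum>i<m. f (Suc i)) + f 0"
    by simp
  also have "\<dots> = (\<Sum>i<Suc m. f i)"
    by (simp only: sum.lessThan_Suc_shift add.commute)
  finally show ?thesis using Suc by simp
qed simp

lemma cyclic_sum_telescope:
  "cyclic_sum (\<lambda>x y. g y - g x) xs = (0 :: 'a::ab_group_add)"
  using sum_lessThan_mod_shift[where L="length xs" and f="\<lambda>i. g (xs ! i)"]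
  by (simp add: cyclic_sum_def sum_subtractf)

text \<open>Signed steps of a walk along the outer rim (\<open>+1\<close> for \<open>u\<^sub>i u\<^sub>i\<^sub>+\<^sub>1\<close>) and the inner rim
  (\<open>+1\<close> for \<open>v\<^sub>i v\<^sub>i\<^sub>+\<^sub>k\<close>); they are meaningful only on edges.\<close>

definition outer_step :: "nat \<Rightarrow> bool \<times> nat \<Rightarrow> bool \<times> nat \<Rightarrow> int" where
  "outer_step n x y =
     (if \<not> fst x \<and> \<not> fst y then if snd y = (snd x + 1) mod n then 1 else -1 else 0)"

definition inner_step :: "nat \<Rightarrow> nat \<Rightarrow> bool \<times> nat \<Rightarrow> bool \<times> nat \<Rightarrow> int" where
  "inner_step n k x y =
     (if fst x \<and> fst y then if snd y = (snd x + k) mod n then 1 else -1 else 0)"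

definition spoke_step :: "bool \<times> nat \<Rightarrow> bool \<times> nat \<Rightarrow> int" where
  "spoke_step x y = of_bool (fst x \<noteq> fst y)"

lemma int_mod_add_dvd: "int n dvd int ((a + c) mod n) - int a - int c"
  by (simp add: of_nat_mod mod_eq_dvd_iff[symmetric] diff_diff_eq)

lemma pet_E_index_step:
  assumes "pet_E n k x y"
  shows "int n dvd int (snd y) - int (snd x) - outer_step n x y - int k * inner_step n k x y"
proof -
  have backward: "int n dvd int a - int ((a + c) mod n) + int c" for a c
    using dvd_minus_iff[THEN iffD2, OF int_mod_add_dvd[of n a c]] by (simp add: algebra_simps)
  show ?thesis
    using assms int_mod_add_dvd[of n "snd x" 1] int_mod_add_dvd[of n "snd x" k]
      backward[of "snd y" 1] backward[of "snd y" k]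
    by (cases x; cases y) (auto simp: pet_E_def outer_step_def inner_step_def)
qed

lemma closed_walk_index_dvd:
  assumes "\<forall>i<length xs. pet_E n k (xs ! i) (xs ! ((i + 1) mod length xs))"
  shows "int n dvd cyclic_sum (outer_step n) xs + int k * cyclic_sum (inner_step n k) xs"
proof -
  let ?d = "\<lambda>x y. int (snd y) - int (snd x) - outer_step n x y - int k * inner_step n k x y"
  have "int n dvd cyclic_sum ?d xs"
    unfolding cyclic_sum_def using assms by (intro dvd_sum) (auto intro: pet_E_index_step)
  moreover have "cyclic_sum ?d xs
      = - (cyclic_sum (outer_step n) xs + int k * cyclic_sum (inner_step n k) xs)"
    using cyclic_sum_telescope[of "\<lambda>x. int (snd x)" xs]
    by (simp add: cyclic_sum_def sum_subtractf sum_distrib_left)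
  ultimately show ?thesis by (metis dvd_minus_iff)
qed

lemma length_eq_cyclic_sum_steps:
  "int (length xs) = cyclic_sum (\<lambda>x y. \<bar>outer_step n x y\<bar>) xs
     + cyclic_sum (\<lambda>x y. \<bar>inner_step n k x y\<bar>) xs + cyclic_sum spoke_step xs"
proof -
  have "\<bar>outer_step n x y\<bar> + \<bar>inner_step n k x y\<bar> + spoke_step x y = 1" for x y
    by (auto simp: outer_step_def inner_step_def spoke_step_def)
  then show ?thesis by (simp add: cyclic_sum_def sum.distrib[symmetric])
qed

lemma even_cyclic_sum_spoke: "even (cyclic_sum spoke_step xs)"
proof -
  have "even (cyclic_sum (\<lambda>x y. spoke_step x y - (of_bool (fst y) - of_bool (fst x))) xs)"
    unfolding cyclic_sum_def by (intro dvd_sum) (auto simp: spoke_step_def)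
  then show ?thesis
    using cyclic_sum_telescope[of "\<lambda>x. of_bool (fst x) :: int" xs]
    by (simp add: cyclic_sum_def sum_subtractf)
qed

lemma odd_cyclic_sum_steps:
  assumes "odd (length xs)"
  shows "odd (cyclic_sum (outer_step n) xs + cyclic_sum (inner_step n k) xs)"
proof -
  have "even (cyclic_sum (\<lambda>x y. \<bar>outer_step n x y\<bar> - outer_step n x y) xs)"
    and "even (cyclic_sum (\<lambda>x y. \<bar>inner_step n k x y\<bar> - inner_step n k x y) xs)"
    unfolding cyclic_sum_def by (intro dvd_sum; auto simp: outer_step_def inner_step_def)+
  moreover have "odd (int (length xs))" using assms by simp
  ultimately show ?thesis
    using length_eq_cyclic_sum_steps[of xs n k] even_cyclic_sum_spoke[of xs]
    by (simp add: cyclic_sum_def sum_subtractf)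
qed

lemma spoke_free_cyclic_sum:
  assumes "cyclic_sum spoke_step xs = 0"
  shows "cyclic_sum (outer_step n) xs = 0 \<or> cyclic_sum (inner_step n k) xs = 0"
proof -
  have "\<forall>i<length xs. spoke_step (xs ! i) (xs ! ((i + 1) mod length xs)) = 0"
    using assms unfolding cyclic_sum_def
    by (subst (asm) sum_nonneg_eq_0_iff) (auto simp: spoke_step_def)
  then have rim: "fst (xs ! i) = fst (xs ! 0)" if "i < length xs" for i
    using that by (induction i) (auto simp: spoke_step_def)
  then show ?thesis
    by (cases "fst (xs ! 0)")
      (auto simp: cyclic_sum_def outer_step_def inner_step_def intro!: sum.neutral)
qed

lemma pet_odd_closed_walk_displacement:
  assumes walk: "\<forall>i<length xs. pet_E n k (xs ! i) (xs ! ((i + 1) mod length xs))"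
    and odd: "odd (length xs)"
  obtains x y :: int where "int n dvd x + int k * y" "odd (x + y)"
    "\<bar>x\<bar> + \<bar>y\<bar> \<le> int (length xs)"
    "x \<noteq> 0 \<Longrightarrow> y \<noteq> 0 \<Longrightarrow> \<bar>x\<bar> + \<bar>y\<bar> + 2 \<le> int (length xs)"
proof -
  define x where "x = cyclic_sum (outer_step n) xs"
  define y where "y = cyclic_sum (inner_step n k) xs"
  define s where "s = cyclic_sum spoke_step xs"
  have "\<bar>x\<bar> \<le> cyclic_sum (\<lambda>u v. \<bar>outer_step n u v\<bar>) xs"
    and "\<bar>y\<bar> \<le> cyclic_sum (\<lambda>u v. \<bar>inner_step n k u v\<bar>) xs"
    unfolding x_def y_def cyclic_sum_def by (rule sum_abs)+
  then have len: "\<bar>x\<bar> + \<bar>y\<bar> + s \<le> int (length xs)"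
    using length_eq_cyclic_sum_steps[of xs n k] unfolding s_def by linarith
  have "s \<ge> 0"
    unfolding s_def cyclic_sum_def by (rule sum_nonneg) (simp add: spoke_step_def)
  moreover have "s \<noteq> 0" if "x \<noteq> 0" "y \<noteq> 0"
    using spoke_free_cyclic_sum[of xs n k] that unfolding x_def y_def s_def by blast
  moreover have "even s" unfolding s_def by (rule even_cyclic_sum_spoke)
  ultimately have two_spokes: "s \<ge> 2" if "x \<noteq> 0" "y \<noteq> 0"
    using that by presburger
  show thesis
  proof (rule that)
    show "int n dvd x + int k * y" unfolding x_def y_def by (rule closed_walk_index_dvd[OF walk])
    show "odd (x + y)" unfolding x_def y_def by (rule odd_cyclic_sum_steps[OF odd])
  qed (use len \<open>s \<ge> 0\<close> two_spokes in force)+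
qed

lemma lin_comb_eq_0_odd_sum:
  fixes x y k :: int
  assumes "x + k * y = 0" "odd (x + y)" "0 < k"
  shows "even k" "x \<noteq> 0" "y \<noteq> 0" "k + 1 \<le> \<bar>x\<bar> + \<bar>y\<bar>"
proof -
  have x: "x = - (k * y)" using assms(1) by simp
  then have "odd (y * (1 - k))" using assms(2) by (simp add: algebra_simps)
  then show "even k" and "y \<noteq> 0" by auto
  then show "x \<noteq> 0" using x assms(3) by simp
  have "\<bar>x\<bar> + \<bar>y\<bar> = (k + 1) * \<bar>y\<bar>" using x assms(3) by (simp add: abs_mult algebra_simps)
  also have "\<dots> \<ge> (k + 1) * 1" using \<open>y \<noteq> 0\<close> assms(3) by (intro mult_left_mono) auto
  finally show "k + 1 \<le> \<bar>x\<bar> + \<bar>y\<bar>" by simp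
qed

lemma dvd_lin_comb_le:
  fixes x y :: int
  assumes "int n dvd x + int k * y" "x + int k * y \<noteq> 0" "1 \<le> k"
  shows "int n \<le> int k * (\<bar>x\<bar> + \<bar>y\<bar>)"
proof -
  have "int n \<le> \<bar>x + int k * y\<bar>" using dvd_imp_le_int[OF assms(2,1)] by simp
  also have "\<dots> \<le> \<bar>x\<bar> + int k * \<bar>y\<bar>"
    using abs_triangle_ineq[of x "int k * y"] by (simp add: abs_mult)
  also have "\<dots> \<le> int k * (\<bar>x\<bar> + \<bar>y\<bar>)"
  proof -
    have "\<bar>x\<bar> \<le> int k * \<bar>x\<bar>" using assms(3) mult_right_mono[of 1 "int k" "\<bar>x\<bar>"] by simp
    then show ?thesis by (simp add: distrib_left)
  qed
  finally show ?thesis .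
qed

lemma gcd_pred_dvd_sum:
  fixes x y :: int
  assumes "int n dvd x + int k * y" "1 \<le> k"
  shows "int (gcd n (k - 1)) dvd x + y"
proof -
  have "int (gcd n (k - 1)) dvd (x + int k * y) - int (k - 1) * y"
  proof (rule dvd_diff)
    show "int (gcd n (k - 1)) dvd x + int k * y"
      using assms(1) by (rule dvd_trans[rotated]) (simp only: of_nat_dvd_iff gcd_dvd1 gcd_dvd2)
    show "int (gcd n (k - 1)) dvd int (k - 1) * y"
      by (rule dvd_mult2) (simp only: of_nat_dvd_iff gcd_dvd1 gcd_dvd2)
  qed
  then show ?thesis using assms(2) by (simp add: of_nat_diff algebra_simps)
qed

lemma gcd_succ_dvd_diff:
  fixes x y :: int
  assumes "int n dvd x + int k * y"
  shows "int (gcd n (k + 1)) dvd x - y"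
proof -
  have "int (gcd n (k + 1)) dvd (x + int k * y) - int (k + 1) * y"
  proof (rule dvd_diff)
    show "int (gcd n (k + 1)) dvd x + int k * y"
      using assms by (rule dvd_trans[rotated]) (simp only: of_nat_dvd_iff gcd_dvd1 gcd_dvd2)
    show "int (gcd n (k + 1)) dvd int (k + 1) * y"
      by (rule dvd_mult2) (simp only: of_nat_dvd_iff gcd_dvd1 gcd_dvd2)
  qed
  then show ?thesis by (simp add: algebra_simps)
qed

lemma min_le_odd_common_multiple:
  fixes a b c :: nat and y :: int
  assumes "int a dvd y" "int b dvd y" "odd y" "a dvd c" "b dvd c + 2"
  shows "min a b \<le> 1 \<or> int (min a b) + 2 \<le> \<bar>y\<bar>"
proof (rule disjCI)
  assume short: "\<not> int (min a b) + 2 \<le> \<bar>y\<bar>"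
  show "min a b \<le> 1"
  proof (rule ccontr)
    assume "\<not> min a b \<le> 1"
    obtain t where t: "y = int a * t" using assms(1) by (elim dvdE)
    have "\<bar>t\<bar> = 1"
    proof (rule ccontr)
      assume "\<bar>t\<bar> \<noteq> 1"
      then have "\<bar>t\<bar> \<ge> 2" using t assms(3) by (cases "t = 0") auto
      then have "int a * 2 \<le> int a * \<bar>t\<bar>" by (intro mult_left_mono) auto
      then have "int a * 2 \<le> \<bar>y\<bar>" by (simp add: t abs_mult)
      then show False using short \<open>\<not> min a b \<le> 1\<close> by linarith
    qed
    then have "\<bar>y\<bar> = int a" using t by (simp add: abs_mult)
    then have "int b dvd int a" using assms(2) by (metis dvd_abs_iff)
    then have "b dvd c" using assms(4) by (metis of_nat_dvd_iff dvd_trans)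
    then have "b dvd 2" using assms(5) by (simp only: dvd_add_right_iff)
    moreover have "odd b"
    proof
      assume "even b"
      then have "2 dvd y" using assms(2) by (auto intro: dvd_trans[of 2 "int b"])
      then show False using assms(3) by simp
    qed
    ultimately have "b = 1" using dvd_imp_le[of b 2] by (cases "b = 0"; cases "b = 2") auto
    then show False using \<open>\<not> min a b \<le> 1\<close> by simp
  qed
qed

lemma min_gcd_pred_succ_bound:
  fixes x y :: int
  assumes k: "2 \<le> k" "2 * k \<le> n" and dvd: "int n dvd x + int k * y" and odd: "odd (x + y)"
    and short: "\<bar>x\<bar> + \<bar>y\<bar> \<le> int L"
    and spokes: "x \<noteq> 0 \<Longrightarrow> y \<noteq> 0 \<Longrightarrow> \<bar>x\<bar> + \<bar>y\<bar> + 2 \<le> int L"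
    and L: "3 \<le> L"
  shows "min (gcd n (k - 1)) (gcd n (k + 1)) + 2 \<le> L"
proof -
  let ?g1 = "gcd n (k - 1)" and ?g2 = "gcd n (k + 1)"
  consider "y = 0" | "x = 0" "y \<noteq> 0" | "x \<noteq> 0" "y \<noteq> 0" by blast
  then show ?thesis
  proof cases
    case 1
    then have "x \<noteq> 0" using odd by (intro notI) simp
    then have "int n \<le> \<bar>x\<bar>" using dvd_imp_le_int[of x "int n"] dvd 1 by simp
    moreover have "?g1 \<le> k - 1" using k by (simp add: gcd_le2_nat)
    ultimately show ?thesis using k short 1 by linarith
  next
    case 2
    have "int ?g1 dvd y" "int ?g2 dvd y"
      using gcd_pred_dvd_sum[of n 0 k y] gcd_succ_dvd_diff[of n 0 k y] dvd 2 k by simp_all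
    moreover have "odd y" using odd 2 by simp
    moreover have "?g2 dvd (k - 1) + 2" using k by simp
    ultimately have "min ?g1 ?g2 \<le> 1 \<or> int (min ?g1 ?g2) + 2 \<le> \<bar>y\<bar>"
      by (intro min_le_odd_common_multiple[of ?g1 y ?g2 "k - 1"]) simp_all
    then show ?thesis using short 2 L by linarith
  next
    case 3
    have "int ?g1 dvd x + y" using gcd_pred_dvd_sum[of n x k y] dvd k by simp
    moreover have "x + y \<noteq> 0" using odd by (intro notI) simp
    ultimately have "int ?g1 \<le> \<bar>x + y\<bar>" using dvd_imp_le_int[of "x + y" "int ?g1"] by simp
    then show ?thesis using spokes 3 abs_triangle_ineq[of x y] by linarith
  qed
qed

lemma bipartite_pet_even_odd:
  assumes "even n" "odd k"
  shows "bipartite (pet_V n) (pet_E n k)"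
  unfolding bipartite_def
proof (intro exI[of _ "\<lambda>(b, i). b \<noteq> even i"] ballI impI)
  fix x y assume "pet_E n k x y"
  then obtain b i c j where xy: "x = (b, i)" "y = (c, j)"
    and e: "(\<not> b \<and> \<not> c \<and> (j = (i + 1) mod n \<or> i = (j + 1) mod n)) \<or> (b \<noteq> c \<and> i = j) \<or>
      (b \<and> c \<and> (j = (i + k) mod n \<or> i = (j + k) mod n))"
    by (cases x, cases y) (auto simp: pet_E_def)
  have "even ((a + 1) mod n) \<longleftrightarrow> odd a" "even ((a + k) mod n) \<longleftrightarrow> odd a" for a
    using assms by (simp_all add: dvd_mod_iff)
  with e show "(case x of (b, i) \<Rightarrow> b \<noteq> even i) \<noteq> (case y of (b, i) \<Rightarrow> b \<noteq> even i)"
    unfolding xy by auto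
qed

lemma is_cycle_pet_k_plus_3:
  assumes "2 \<le> k" "2 * k \<le> n"
  shows "is_cycle (pet_V n) (pet_E n k)
    (map (\<lambda>i. if i \<le> k then (False, i) else if i = k + 1 then (True, k) else (True, 0)) [0..<k + 3])"
  (is "is_cycle _ _ (map ?f _)")
proof (rule is_cycle_map)
  show "inj_on ?f {..<k + 3}" using assms by (auto simp: inj_on_def split: if_splits)
  show "\<forall>i<k + 3. ?f i \<in> pet_V n" using assms by (auto simp: pet_V_def)
  show "\<forall>i<k + 3. pet_E n k (?f i) (?f ((i + 1) mod (k + 3)))"
  proof (intro allI impI)
    fix i assume "i < k + 3"
    then consider "i < k" | "i = k" | "i = k + 1" | "i = k + 2" by linarith
    then show "pet_E n k (?f i) (?f ((i + 1) mod (k + 3)))"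
    proof cases
      case 4
      then have "i + 1 = k + 3" by simp
      then have "(i + 1) mod (k + 3) = 0" by (simp only: mod_self)
      then show ?thesis using assms 4 by (simp add: pet_E_def)
    qed (use assms in \<open>auto simp: pet_E_def\<close>)
  qed
qed simp

lemma is_cycle_pet_inner_wrap:
  assumes r: "1 \<le> r" and q: "1 \<le> q" and k: "1 \<le> k" and n: "n = r + q * k"
  shows "is_cycle (pet_V n) (pet_E n k)
    (map (\<lambda>i. if i \<le> r then (False, i) else (True, (r + (i - r - 1) * k) mod n)) [0..<r + q + 2])"
  (is "is_cycle _ _ (map ?f _)")
proof (rule is_cycle_map)
  have rn: "r < n" using n q k by (simp add: Suc_le_eq)
  have inner: "(r + j * k) mod n = (if j = q then 0 else r + j * k)" if "j \<le> q" for j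
  proof -
    have "j < q \<Longrightarrow> r + j * k < n" using n k by simp
    then show ?thesis using that n by (cases "j = q") auto
  qed
  have "inj_on (\<lambda>j. (r + j * k) mod n) {..q}"
    by (rule inj_onI) (use inner r k in \<open>auto split: if_splits\<close>)
  then show "inj_on ?f {..<r + q + 2}"
    by (fastforce simp: inj_on_def split: if_splits)
  show "\<forall>i<r + q + 2. ?f i \<in> pet_V n" using rn by (auto simp: pet_V_def)
  show "\<forall>i<r + q + 2. pet_E n k (?f i) (?f ((i + 1) mod (r + q + 2)))"
  proof (intro allI impI)
    fix i assume "i < r + q + 2"
    then consider "i \<le> r" | j where "i = r + 1 + j" "j < q" | "i = r + q + 1"
      by (cases "i \<le> r"; cases "i = r + q + 1") (auto intro: that(2)[of "i - r - 1"])
    then show "pet_E n k (?f i) (?f ((i + 1) mod (r + q + 2)))"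
    proof cases
      case 1
      then show ?thesis using rn by (auto simp: pet_E_def)
    next
      case (2 j)
      have "((r + j * k) mod n + k) mod n = (r + (j + 1) * k) mod n"
        unfolding mod_add_left_eq by (simp add: algebra_simps)
      then show ?thesis using 2 rn by (auto simp: pet_E_def)
    next
      case 3
      then show ?thesis using rn n by (simp add: pet_E_def)
    qed
  qed
qed (use r q in simp)

lemma pet_odd_cycle_inner_wrap:
  assumes "2 \<le> k" "2 * k \<le> n" "odd k" "odd n"
  obtains xs where "is_cycle (pet_V n) (pet_E n k) xs" "odd (length xs)"
    "k * length xs \<le> n + k * (k + 1)"
proof -
  define q where "q = (n - 1) div k"
  define r where "r = (n - 1) mod k + 1"
  have n: "n = r + q * k" using assms(1,2) div_mult_mod_eq[of "n - 1" k] unfolding q_def r_def by linarith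
  have r: "1 \<le> r" "r \<le> k" using assms(1) by (simp_all add: r_def Suc_leI)
  have q: "1 \<le> q" using assms(1,2) by (simp add: q_def Suc_le_eq div_greater_zero_iff)
  have "odd (r + q + 2)" using n assms(3,4) by simp
  moreover have "k * (r + q + 2) \<le> n + k * (k + 1)"
  proof -
    have "(k - 1) * r \<le> (k - 1) * k" using r by simp
    then have "k * r - r \<le> k * k - k" by (simp add: diff_mult_distrib)
    moreover have "r \<le> k * r" "k \<le> k * k" using assms(1) by simp_all
    ultimately have "k * r + k \<le> r + k * k" by linarith
    then show ?thesis using n by (simp add: algebra_simps)
  qed
  ultimately show thesis
    using that[OF is_cycle_pet_inner_wrap[OF r(1) q _ n]] assms(1) by simp
qed

lemma pet_odd_cycle_exists:
  assumes "2 \<le> k" "2 * k \<le> n" "odd n \<or> even k"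
  obtains xs where "is_cycle (pet_V n) (pet_E n k) xs" "odd (length xs)"
proof (cases "even k")
  case True
  then show thesis using that is_cycle_pet_k_plus_3[OF assms(1,2)] by simp
next
  case False
  then show thesis using that pet_odd_cycle_inner_wrap[OF assms(1,2)] assms(3) by blast
qed

lemma pet_odd_girth_displacement:
  assumes "2 \<le> k" "2 * k \<le> n" "odd n \<or> even k"
  defines "g \<equiv> odd_girth (pet_V n) (pet_E n k)"
  obtains x y :: int where "int n dvd x + int k * y" "odd (x + y)" "\<bar>x\<bar> + \<bar>y\<bar> \<le> int g"
    "x \<noteq> 0 \<Longrightarrow> y \<noteq> 0 \<Longrightarrow> \<bar>x\<bar> + \<bar>y\<bar> + 2 \<le> int g" "3 \<le> g"
proof -
  obtain xs where "is_cycle (pet_V n) (pet_E n k) xs" "length xs = g" "odd g"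
    using pet_odd_cycle_exists[OF assms(1-3)] odd_girth_attained unfolding g_def by metis
  then show thesis
    using that pet_odd_closed_walk_displacement[of xs n k] unfolding is_cycle_def by auto
qed

lemma pet_odd_girth_upper_bound:
  assumes k: "2 \<le> k" "2 * k \<le> n" and parity: "odd n \<or> even k"
    and ne: "odd_girth (pet_V n) (pet_E n k) \<noteq> k + 3"
  shows "real (odd_girth (pet_V n) (pet_E n k)) \<le> real n / real k * real (par k) + real k + 1"
proof (cases "even k")
  case even: True
  have "odd_girth (pet_V n) (pet_E n k) \<le> k + 3"
    using odd_girth_le[OF is_cycle_pet_k_plus_3[OF k]] even by simp
  moreover have "odd (odd_girth (pet_V n) (pet_E n k))"
    using pet_odd_cycle_exists[OF k parity] odd_girth_attained by metis
  then have "odd_girth (pet_V n) (pet_E n k) \<noteq> k + 2" using even by auto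
  ultimately have "odd_girth (pet_V n) (pet_E n k) \<le> k + 1" using ne by linarith
  then show ?thesis using even by (simp add: par_def)
next
  case odd: False
  obtain xs where "is_cycle (pet_V n) (pet_E n k) xs" "odd (length xs)"
    "k * length xs \<le> n + k * (k + 1)"
    using pet_odd_cycle_inner_wrap[OF k odd] parity odd by blast
  then have "k * odd_girth (pet_V n) (pet_E n k) \<le> n + k * (k + 1)"
    by (meson odd_girth_le le_trans mult_le_mono2)
  then have "real k * real (odd_girth (pet_V n) (pet_E n k)) \<le> real n + real k * (real k + 1)"
    by (simp add: distrib_left flip: of_nat_mult of_nat_add of_nat_le_iff)
  then show ?thesis using odd k by (simp add: par_def field_simps)
qed

theorem theorem2:
  fixes n k :: nat
  assumes "2 < 2 * k" and "2 * k \<le> n"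
    and "\<not> bipartite (pet_V n) (pet_E n k)"
  shows "odd_girth (pet_V n) (pet_E n k) = k + 3 \<or>
    (max (real n / real k) (real (min (gcd n (k - 1)) (gcd n (k + 1))) + 2)
        \<le> real (odd_girth (pet_V n) (pet_E n k)) \<and>
     real (odd_girth (pet_V n) (pet_E n k)) \<le> real n / real k * real (par k) + real k + 1)"
proof -
  let ?og = "odd_girth (pet_V n) (pet_E n k)"
  have k: "2 \<le> k" using assms(1) by simp
  have parity: "odd n \<or> even k" using bipartite_pet_even_odd assms(3) by blast
  obtain x y where dvd: "int n dvd x + int k * y" and odd: "odd (x + y)"
    and short: "\<bar>x\<bar> + \<bar>y\<bar> \<le> int ?og"
    and spokes: "x \<noteq> 0 \<Longrightarrow> y \<noteq> 0 \<Longrightarrow> \<bar>x\<bar> + \<bar>y\<bar> + 2 \<le> int ?og" and "3 \<le> ?og"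
    using pet_odd_girth_displacement[OF k assms(2) parity] by blast
  show ?thesis
  proof (cases "?og = k + 3")
    case og_ne: False
    have "x + int k * y \<noteq> 0"
    proof
      assume "x + int k * y = 0"
      from lin_comb_eq_0_odd_sum[OF this odd] k spokes have "even k" "k + 3 \<le> ?og" by auto
      then show False using odd_girth_le[OF is_cycle_pet_k_plus_3[OF k assms(2)]] og_ne by simp
    qed
    then have "int n \<le> int k * (\<bar>x\<bar> + \<bar>y\<bar>)" using dvd_lin_comb_le[OF dvd] k by simp
    also have "\<dots> \<le> int k * int ?og" using short by (intro mult_left_mono) auto
    finally have "real n / real k \<le> real ?og"
      using k by (simp add: divide_le_eq mult.commute flip: of_nat_mult)
    moreover have "min (gcd n (k - 1)) (gcd n (k + 1)) + 2 \<le> ?og"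
      by (rule min_gcd_pred_succ_bound[OF k assms(2) dvd odd short spokes \<open>3 \<le> ?og\<close>])
    ultimately show ?thesis using pet_odd_girth_upper_bound[OF k assms(2) parity og_ne] by simp
  qed simp
qed

end
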